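(* Let $(S,\curlyvee)$ be a $\curlyvee$-algebra and let $I$ be a relatively maximal $\lesssim$-ideal of $S$ (i.e., relatively maximal with respect to not containing some $d\in S$). Define $E_I=\{(a,b)\in S\times S: a\notin I,\ b\notin I,\ a\curlyvee b\notin I\}$ and $\epsilon_I=E_I\cup(I\times I)$. Then $\epsilon_I$ is a congruence on $(S,\curlyvee)$ and $S/\epsilon_I$ is a flat $\curlyvee$-algebra. Moreover, $S$ is a subdirect product of the algebras $S/\epsilon_I$ as $I$ ranges over all relatively maximal $\lesssim$-ideals of $S$.
   Context: A $\curlyvee$-algebra is an algebra $(S,\curlyvee)$ with one binary operation such that, defining $a\sqcup b=a\curlyvee(a\curlyvee b)$ and $a\lesssim b$ iff $b\sqcup a=b$: $\sqcup$ is associative, $a\sqcup a=a$ and $a\sqcup b=(a\sqcup b)\sqcup a$; $\curlyvee$ is commutative and idempotent; $(a\curlyvee b)\sqcup(a\sqcup b)=a\sqcup b$; $a\sqcup(b\curlyvee c)=(a\sqcup b)\curlyvee(a\sqcup c)$; and if $d\lesssim a,b,c,a\curlyvee b,b\curlyvee c$ then $d\lesssim a\curlyvee c$. A $\lesssim$-ideal is a non-empty subset $I$ that is a down-set under $\lesssim$ with $i\sqcup j\in I$ for all $i,j\in I$; it is relatively maximal with respect to not containing $d$ if $d\notin I$ and no $\lesssim$-ideal properly containing $I$ omits $d$. A flat $\curlyvee$-algebra is an algebra $(T,\curlyvee)$ with an element $0$ such that $a\curlyvee b=0$ for distinct $a,b$ both different from $0$, and $a\curlyvee a=a$, $a\curlyvee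 0=0\curlyvee a=a$ for all $a$. *)

theory Defs
  imports Main
begin

text \<open>A \<curlyvee>-algebra is represented by its binary operation f on the whole type 'a.\<close>

definition vsq :: "('a \<Rightarrow> 'a \<Rightarrow> 'a) \<Rightarrow> 'a \<Rightarrow> 'a \<Rightarrow> 'a" where
  "vsq f a b = f a (f a b)"

definition vle :: "('a \<Rightarrow> 'a \<Rightarrow> 'a) \<Rightarrow> 'a \<Rightarrow> 'a \<Rightarrow> bool" where
  "vle f a b \<longleftrightarrow> vsq f b a = b"

definition valgebra :: "('a \<Rightarrow> 'a \<Rightarrow> 'a) \<Rightarrow> bool" where
  "valgebra f \<longleftrightarrow>
     (\<forall>a b c. vsq f (vsq f a b) c = vsq f a (vsq f b c)) \<and>
     (\<forall>a. vsq f a a = a) \<and>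
     (\<forall>a b. vsq f a b = vsq f (vsq f a b) a) \<and>
     (\<forall>a b. f a b = f b a) \<and>
     (\<forall>a. f a a = a) \<and>
     (\<forall>a b. vsq f (f a b) (vsq f a b) = vsq f a b) \<and>
     (\<forall>a b c. vsq f a (f b c) = f (vsq f a b) (vsq f a c)) \<and>
     (\<forall>a b c d. vle f d a \<and> vle f d b \<and> vle f d c \<and> vle f d (f a b) \<and> vle f d (f b c)
                 \<longrightarrow> vle f d (f a c))"

definition videal :: "('a \<Rightarrow> 'a \<Rightarrow> 'a) \<Rightarrow> 'a set \<Rightarrow> bool" where
  "videal f I \<longleftrightarrow> I \<noteq> {} \<and> (\<forall>i\<in>I. \<forall>a. vle f a i \<longrightarrow> a \<in> I) \<and>
                  (\<forall>i\<in>I. \<forall>j\<in>I. vsq f i j \<in> I)"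

definition rel_max_wrt :: "('a \<Rightarrow> 'a \<Rightarrow> 'a) \<Rightarrow> 'a set \<Rightarrow> 'a \<Rightarrow> bool" where
  "rel_max_wrt f I d \<longleftrightarrow> videal f I \<and> d \<notin> I \<and>
                          (\<forall>J. videal f J \<and> I \<subset> J \<longrightarrow> d \<in> J)"

definition rel_max_ideal :: "('a \<Rightarrow> 'a \<Rightarrow> 'a) \<Rightarrow> 'a set \<Rightarrow> bool" where
  "rel_max_ideal f I \<longleftrightarrow> (\<exists>d. rel_max_wrt f I d)"

definition E_rel :: "('a \<Rightarrow> 'a \<Rightarrow> 'a) \<Rightarrow> 'a set \<Rightarrow> ('a \<times> 'a) set" where
  "E_rel f I = {(a, b). a \<notin> I \<and> b \<notin> I \<and> f a b \<notin> I}"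

definition eps_rel :: "('a \<Rightarrow> 'a \<Rightarrow> 'a) \<Rightarrow> 'a set \<Rightarrow> ('a \<times> 'a) set" where
  "eps_rel f I = E_rel f I \<union> (I \<times> I)"

definition congruence :: "('a \<Rightarrow> 'a \<Rightarrow> 'a) \<Rightarrow> ('a \<times> 'a) set \<Rightarrow> bool" where
  "congruence f \<theta> \<longleftrightarrow> equiv UNIV \<theta> \<and>
     (\<forall>a b c d. (a, b) \<in> \<theta> \<and> (c, d) \<in> \<theta> \<longrightarrow> (f a c, f b d) \<in> \<theta>)"

definition quot_op :: "('a \<Rightarrow> 'a \<Rightarrow> 'a) \<Rightarrow> ('a \<times> 'a) set \<Rightarrow> 'a set \<Rightarrow> 'a set \<Rightarrow> 'a set" where
  "quot_op f \<theta> X Y = \<theta> `` {f (SOME x. x \<in> X) (SOME y. y \<in> Y)}"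

definition flat_valgebra :: "'b set \<Rightarrow> ('b \<Rightarrow> 'b \<Rightarrow> 'b) \<Rightarrow> bool" where
  "flat_valgebra T g \<longleftrightarrow> (\<exists>z\<in>T.
      (\<forall>a\<in>T. \<forall>b\<in>T. a \<noteq> z \<and> b \<noteq> z \<and> a \<noteq> b \<longrightarrow> g a b = z) \<and>
      (\<forall>a\<in>T. g a a = a \<and> g a z = a \<and> g z a = a))"

definition subdirect_product ::
  "('a \<Rightarrow> 'a \<Rightarrow> 'a) \<Rightarrow> 'k set \<Rightarrow> ('k \<Rightarrow> 'b set) \<Rightarrow> ('k \<Rightarrow> 'b \<Rightarrow> 'b \<Rightarrow> 'b) \<Rightarrow> bool" where
  "subdirect_product f K A g \<longleftrightarrow> (\<exists>h :: 'a \<Rightarrow> 'k \<Rightarrow> 'b.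
      (\<forall>a. \<forall>k\<in>K. h a k \<in> A k) \<and>
      (\<forall>a b. \<forall>k\<in>K. h (f a b) k = g k (h a k) (h b k)) \<and>
      (\<forall>a b. (\<forall>k\<in>K. h a k = h b k) \<longrightarrow> a = b) \<and>
      (\<forall>k\<in>K. (\<lambda>a. h a k) ` UNIV = A k))"

end

theory Submission
  imports Defs
begin

text \<open>The operation \<open>\<squnion>\<close> is a left regular band and \<open>\<lesssim>\<close> a preorder. If \<open>I\<close> is relatively
  maximal with respect to \<open>d\<close>, then for each \<open>x \<notin> I\<close> the ideal generated by \<open>I\<close> and \<open>x\<close> must
  contain \<open>d\<close>, i.e. \<open>d \<lesssim> u \<squnion> x\<close> for some \<open>u \<in> I\<close>, and one \<open>u\<close> serves finitely many \<open>x\<close> at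
  once. As \<open>u \<squnion> -\<close> distributes over \<open>\<curlyvee>\<close>, the last axiom applied to the translates \<open>u \<squnion> a\<close>
  shows that \<open>E\<^sub>I\<close> is transitive. So \<open>\<epsilon>\<^sub>I\<close> is an equivalence whose class \<open>I\<close> is neutral for
  \<open>\<curlyvee>\<close>; it is a congruence, and two distinct classes other than \<open>I\<close> join to \<open>I\<close>, so the
  quotient is flat. Finally, by Zorn's lemma the principal ideal of any \<open>c\<close> with \<open>a \<not>\<lesssim> c\<close>
  extends to an ideal relatively maximal with respect to \<open>a\<close>; such ideals separate
  points, which makes the quotient maps a subdirect embedding.\<close>

lemma quot_op_class:
  assumes "congruence f \<theta>"
  shows "quot_op f \<theta> (\<theta> `` {a}) (\<theta> `` {b}) = \<theta> `` {f a b}"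
proof -
  have equiv: "equiv UNIV \<theta>"
    using assms unfolding congruence_def by blast
  let ?x = "SOME x. x \<in> \<theta> `` {a}" and ?y = "SOME y. y \<in> \<theta> `` {b}"
  have "?x \<in> \<theta> `` {a}" "?y \<in> \<theta> `` {b}"
    using equiv_class_self[OF equiv] by (metis UNIV_I someI)+
  then have "(f a b, f ?x ?y) \<in> \<theta>"
    using assms unfolding congruence_def by blast
  then show ?thesis
    unfolding quot_op_def using equiv_class_eq[OF equiv] by metis
qed

lemma subdirect_product_quotients:
  assumes cong: "\<And>k. k \<in> K \<Longrightarrow> congruence f (\<theta> k)"
    and separating: "\<And>a b. \<forall>k\<in>K. (a, b) \<in> \<theta> k \<Longrightarrow> a = b"
  shows "subdirect_product f K (\<lambda>k. UNIV // \<theta> k) (\<lambda>k. quot_op f (\<theta> k))"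
  unfolding subdirect_product_def
proof (intro exI[of _ "\<lambda>a k. \<theta> k `` {a}"] conjI allI ballI impI)
  fix a k
  show "\<theta> k `` {a} \<in> UNIV // \<theta> k"
    by (rule quotientI) simp
  show "(\<lambda>a. \<theta> k `` {a}) ` UNIV = UNIV // \<theta> k"
    unfolding quotient_def by blast
next
  fix a b k
  assume "k \<in> K"
  then show "\<theta> k `` {f a b} = quot_op f (\<theta> k) (\<theta> k `` {a}) (\<theta> k `` {b})"
    by (simp add: quot_op_class cong)
next
  fix a b
  assume same_class: "\<forall>k\<in>K. \<theta> k `` {a} = \<theta> k `` {b}"
  have "(a, b) \<in> \<theta> k" if "k \<in> K" for k
  proof -
    have "equiv UNIV (\<theta> k)"
      using cong[OF that] unfolding congruence_def by blast
    with same_class that show ?thesis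
      using eq_equiv_class_iff[of UNIV "\<theta> k" a b] by simp
  qed
  then have "\<forall>k\<in>K. (a, b) \<in> \<theta> k"
    by blast
  then show "a = b"
    by (rule separating)
qed

lemma videal_vle_closed: "videal f I \<Longrightarrow> b \<in> I \<Longrightarrow> vle f a b \<Longrightarrow> a \<in> I"
  unfolding videal_def by blast

lemma videal_vsq_closed: "videal f I \<Longrightarrow> a \<in> I \<Longrightarrow> b \<in> I \<Longrightarrow> vsq f a b \<in> I"
  unfolding videal_def by blast

lemma rel_max_ideal_videal: "rel_max_ideal f I \<Longrightarrow> videal f I"
  unfolding rel_max_ideal_def rel_max_wrt_def by blast

lemma videal_Union_chain:
  assumes "C \<noteq> {}" and ideals: "\<forall>I\<in>C. videal f I" and chain: "\<forall>I\<in>C. \<forall>J\<in>C. I \<subseteq> J \<or> J \<subseteq> I"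
  shows "videal f (\<Union>C)"
  unfolding videal_def
proof (intro conjI ballI allI impI)
  obtain I where "I \<in> C"
    using \<open>C \<noteq> {}\<close> by blast
  with ideals have "I \<noteq> {}"
    unfolding videal_def by blast
  with \<open>I \<in> C\<close> show "\<Union>C \<noteq> {}"
    by blast
next
  fix i a
  assume "i \<in> \<Union>C" and "vle f a i"
  then obtain I where "I \<in> C" and "i \<in> I"
    by blast
  with ideals \<open>vle f a i\<close> have "a \<in> I"
    using videal_vle_closed by metis
  with \<open>I \<in> C\<close> show "a \<in> \<Union>C"
    by blast
next
  fix i j
  assume "i \<in> \<Union>C" and "j \<in> \<Union>C"
  then obtain I J where "I \<in> C" "J \<in> C" "i \<in> I" "j \<in> J"
    by blast
  with chain have "I \<subseteq> J \<or> J \<subseteq> I"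
    by blast
  with \<open>I \<in> C\<close> \<open>J \<in> C\<close> \<open>i \<in> I\<close> \<open>j \<in> J\<close> obtain K where "K \<in> C" "i \<in> K" "j \<in> K"
    by blast
  moreover from ideals \<open>K \<in> C\<close> have "videal f K"
    by blast
  ultimately have "vsq f i j \<in> K"
    using videal_vsq_closed by metis
  with \<open>K \<in> C\<close> show "vsq f i j \<in> \<Union>C"
    by blast
qed

lemma rel_max_wrt_extend:
  assumes "videal f J" and "d \<notin> J"
  obtains I where "rel_max_wrt f I d" and "J \<subseteq> I"
proof -
  let ?A = "{I. videal f I \<and> d \<notin> I \<and> J \<subseteq> I}"
  have "\<exists>M\<in>?A. \<forall>X\<in>?A. M \<subseteq> X \<longrightarrow> X = M"
  proof (rule subset_Zorn_nonempty)
    show "?A \<noteq> {}"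
      using assms by blast
  next
    fix C
    assume "C \<noteq> {}" and "subset.chain ?A C"
    then have "C \<subseteq> ?A" and "\<forall>I\<in>C. \<forall>J\<in>C. I \<subseteq> J \<or> J \<subseteq> I"
      unfolding subset_chain_def by auto
    with \<open>C \<noteq> {}\<close> show "\<Union>C \<in> ?A"
      using videal_Union_chain[of C f] by auto
  qed
  then obtain M where "M \<in> ?A" and "\<forall>X\<in>?A. M \<subseteq> X \<longrightarrow> X = M"
    by blast
  then have "rel_max_wrt f M d"
    unfolding rel_max_wrt_def by blast
  with \<open>M \<in> ?A\<close> show thesis
    using that by blast
qed

lemma eps_rel_iff:
  "(a, b) \<in> eps_rel f I \<longleftrightarrow> (a \<notin> I \<and> b \<notin> I \<and> f a b \<notin> I) \<or> (a \<in> I \<and> b \<in> I)"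
  unfolding eps_rel_def E_rel_def by auto

locale vee_algebra =
  fixes f :: "'a \<Rightarrow> 'a \<Rightarrow> 'a"  (infixl \<open>\<curlyvee>\<close> 65)
  assumes valgebra: "valgebra f"
begin

abbreviation vsq_op (infixl \<open>\<squnion>\<close> 65)
  where "a \<squnion> b \<equiv> vsq f a b"

abbreviation vle_rel (infix \<open>\<lesssim>\<close> 50)
  where "a \<lesssim> b \<equiv> vle f a b"

lemma vsq_assoc: "(a \<squnion> b) \<squnion> c = a \<squnion> (b \<squnion> c)"
  using valgebra unfolding valgebra_def by blast

lemma vsq_idem [simp]: "a \<squnion> a = a"
  using valgebra unfolding valgebra_def by blast

lemma vsq_left_regular: "(a \<squnion> b) \<squnion> a = a \<squnion> b"
  using valgebra unfolding valgebra_def by metis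

lemma join_commute: "a \<curlyvee> b = b \<curlyvee> a"
  using valgebra unfolding valgebra_def by blast

lemma join_idem [simp]: "a \<curlyvee> a = a"
  using valgebra unfolding valgebra_def by blast

lemma join_vsq_absorb: "(a \<curlyvee> b) \<squnion> (a \<squnion> b) = a \<squnion> b"
  using valgebra unfolding valgebra_def by blast

lemma vsq_join_distrib: "a \<squnion> (b \<curlyvee> c) = (a \<squnion> b) \<curlyvee> (a \<squnion> c)"
  using valgebra unfolding valgebra_def by blast

lemma vle_join_trans:
  assumes "d \<lesssim> a" "d \<lesssim> b" "d \<lesssim> c" "d \<lesssim> a \<curlyvee> b" "d \<lesssim> b \<curlyvee> c"
  shows "d \<lesssim> a \<curlyvee> c"
  using valgebra assms unfolding valgebra_def by blast

lemma join_left_join: "(a \<curlyvee> b) \<curlyvee> a = a \<squnion> b"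
  by (simp add: vsq_def join_commute)

lemma vsq_absorb_left [simp]: "a \<squnion> (a \<squnion> b) = a \<squnion> b"
  by (metis vsq_assoc vsq_idem)

lemma vsq_absorb_right [simp]: "a \<squnion> (b \<squnion> a) = a \<squnion> b"
  by (metis vsq_assoc vsq_left_regular)

lemma vsq_absorb_inner [simp]: "a \<squnion> (b \<squnion> (a \<squnion> c)) = a \<squnion> (b \<squnion> c)"
  by (metis vsq_assoc vsq_left_regular)

lemma vle_refl [simp]: "a \<lesssim> a"
  by (simp add: vle_def)

lemma vle_trans: "a \<lesssim> b \<Longrightarrow> b \<lesssim> c \<Longrightarrow> a \<lesssim> c"
  unfolding vle_def by (metis vsq_assoc)

lemma vle_vsq_left: "a \<lesssim> a \<squnion> b"
  unfolding vle_def by (rule vsq_left_regular)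

lemma vle_vsq_right: "b \<lesssim> a \<squnion> b"
  unfolding vle_def by (simp add: vsq_assoc)

lemma vsq_vle_mono:
  assumes "a \<lesssim> b" and "c \<lesssim> e"
  shows "a \<squnion> c \<lesssim> b \<squnion> e"
proof -
  have ba: "b \<squnion> a = b" and ec: "e \<squnion> c = e"
    using assms unfolding vle_def by auto
  have "(b \<squnion> e) \<squnion> (a \<squnion> c) = (b \<squnion> a) \<squnion> (e \<squnion> (a \<squnion> c))"
    by (simp only: vsq_assoc ba)
  also have "\<dots> = b \<squnion> (a \<squnion> (e \<squnion> c))"
    by (simp only: vsq_assoc vsq_absorb_inner)
  also have "\<dots> = b \<squnion> e"
    by (simp only: ec ba flip: vsq_assoc)
  finally show ?thesis
    unfolding vle_def .
qed

lemma join_vle_vsq: "a \<curlyvee> b \<lesssim> a \<squnion> b"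
  unfolding vle_def by (metis join_vsq_absorb vsq_left_regular)

lemma vle_vsq_swap: "a \<squnion> b \<lesssim> b \<squnion> a"
  unfolding vle_def by (simp add: vsq_assoc)

lemma eq_if_vle_vle_join:
  assumes "a \<lesssim> b" and "b \<lesssim> a" and "a \<lesssim> a \<curlyvee> b"
  shows "a = b"
proof -
  have absorb: "(a \<curlyvee> b) \<curlyvee> a = a"
    using assms(2) join_left_join[of a b] unfolding vle_def by simp
  have "a \<curlyvee> b = (a \<curlyvee> b) \<squnion> a"
    using assms(3) unfolding vle_def by simp
  also have "\<dots> = a"
    using absorb by (simp add: vsq_def)
  finally have join_ab: "a \<curlyvee> b = a" .
  have "b = b \<squnion> a"
    using assms(1) unfolding vle_def by simp
  also have "\<dots> = a"
    using join_ab join_commute[of b a] by (simp add: vsq_def)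
  finally show ?thesis
    by simp
qed

lemma videal_vsq_iff:
  assumes "videal f I"
  shows "a \<squnion> b \<in> I \<longleftrightarrow> a \<in> I \<and> b \<in> I"
proof
  assume "a \<squnion> b \<in> I"
  then show "a \<in> I \<and> b \<in> I"
    using videal_vle_closed[OF assms] vle_vsq_left vle_vsq_right by metis
next
  assume "a \<in> I \<and> b \<in> I"
  then show "a \<squnion> b \<in> I"
    using videal_vsq_closed[OF assms] by blast
qed

lemma videal_join_closed:
  assumes "videal f I" and "a \<in> I" and "b \<in> I"
  shows "a \<curlyvee> b \<in> I"
  using videal_vle_closed[OF assms(1) videal_vsq_closed[OF assms] join_vle_vsq] .

lemma videal_join_cancel:
  assumes I: "videal f I" and "a \<in> I" and "a \<curlyvee> b \<in> I"
  shows "b \<in> I"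
proof -
  have "a \<squnion> (a \<curlyvee> b) \<in> I"
    using videal_vsq_closed[OF assms] .
  then have "a \<curlyvee> (a \<curlyvee> b) \<in> I"
    using videal_vle_closed[OF I _ join_vle_vsq] by blast
  then have "a \<squnion> b \<in> I"
    by (simp only: vsq_def)
  then show ?thesis
    by (simp add: videal_vsq_iff[OF I])
qed

lemma videal_principal: "videal f {a. a \<lesssim> b}"
proof -
  have "i \<squnion> j \<lesssim> b" if "i \<lesssim> b" and "j \<lesssim> b" for i j
    using vsq_vle_mono[OF that] by simp
  then show ?thesis
    unfolding videal_def using vle_refl vle_trans by blast
qed

lemma eps_rel_sym: "(a, b) \<in> eps_rel f I \<Longrightarrow> (b, a) \<in> eps_rel f I"
  by (auto simp: eps_rel_iff join_commute)

lemma eps_rel_join_absorb: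
  assumes "videal f I" and "a \<notin> I" and "a \<curlyvee> b \<notin> I"
  shows "(a \<curlyvee> b, a) \<in> eps_rel f I"
  using assms videal_vsq_iff by (simp add: eps_rel_iff join_left_join)

lemma eps_rel_join_ideal:
  assumes I: "videal f I" and "i \<in> I"
  shows "(i \<curlyvee> a, a) \<in> eps_rel f I"
proof (cases "a \<in> I")
  case True
  then show ?thesis
    using assms videal_join_closed by (simp add: eps_rel_iff)
next
  case False
  then have "a \<curlyvee> i \<notin> I"
    using videal_join_cancel[OF assms] join_commute[of a i] by auto
  then show ?thesis
    using eps_rel_join_absorb[OF I False, of i] join_commute[of a i] by simp
qed

lemma rel_max_ideal_separates:
  assumes "\<not> a \<lesssim> b"
  obtains I where "rel_max_ideal f I" and "b \<in> I" and "a \<notin> I"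
proof -
  obtain I where "rel_max_wrt f I a" and "{x. x \<lesssim> b} \<subseteq> I"
    using rel_max_wrt_extend[OF videal_principal, of a b] assms by auto
  then show thesis
    using that vle_refl unfolding rel_max_ideal_def rel_max_wrt_def by blast
qed

lemma eps_rel_separating:
  assumes "\<forall>I. rel_max_ideal f I \<longrightarrow> (a, b) \<in> eps_rel f I"
  shows "a = b"
proof -
  have "x \<lesssim> y" if "\<forall>I. rel_max_ideal f I \<longrightarrow> (x, y) \<in> eps_rel f I" for x y
  proof (rule ccontr)
    assume "\<not> x \<lesssim> y"
    then obtain I where "rel_max_ideal f I" "y \<in> I" "x \<notin> I"
      by (rule rel_max_ideal_separates)
    with that show False
      by (auto simp: eps_rel_iff)
  qed
  then have "a \<lesssim> b" and "b \<lesssim> a"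
    using assms eps_rel_sym by blast+
  moreover have "a \<lesssim> a \<curlyvee> b"
  proof (rule ccontr)
    assume "\<not> a \<lesssim> a \<curlyvee> b"
    then obtain I where I: "rel_max_ideal f I" "a \<curlyvee> b \<in> I" "a \<notin> I"
      by (rule rel_max_ideal_separates)
    then have "b \<notin> I"
      using videal_vle_closed[OF rel_max_ideal_videal[OF I(1)] _ \<open>a \<lesssim> b\<close>] by blast
    with I assms show False
      by (auto simp: eps_rel_iff)
  qed
  ultimately show ?thesis
    by (rule eq_if_vle_vle_join)
qed

end

locale vee_algebra_rel_max = vee_algebra +
  fixes I d
  assumes rel_max: "rel_max_wrt f I d"
begin

lemma ideal: "videal f I"
  using rel_max unfolding rel_max_wrt_def by blast

lemma d_notin: "d \<notin> I"
  using rel_max unfolding rel_max_wrt_def by blast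

lemma outside_covered:
  assumes "x \<notin> I"
  obtains i where "i \<in> I" and "d \<lesssim> i \<squnion> x"
proof -
  obtain i\<^sub>0 where "i\<^sub>0 \<in> I"
    using ideal unfolding videal_def by auto
  txt \<open>\<open>?J\<close> is the ideal generated by \<open>I\<close> and \<open>x\<close>, which maximality forces to contain \<open>d\<close>.\<close>
  let ?J = "{y. \<exists>i\<in>I. y \<lesssim> x \<squnion> i}"
  have "videal f ?J"
    unfolding videal_def
  proof (intro conjI ballI allI impI)
    show "?J \<noteq> {}"
      using \<open>i\<^sub>0 \<in> I\<close> vle_vsq_left by blast
  next
    fix y a
    assume "y \<in> ?J" and "a \<lesssim> y"
    then show "a \<in> ?J"
      using vle_trans by blast
  next
    fix y z
    assume "y \<in> ?J" and "z \<in> ?J"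
    then obtain i j where "i \<in> I" "j \<in> I" "y \<lesssim> x \<squnion> i" "z \<lesssim> x \<squnion> j"
      by blast
    then have "y \<squnion> z \<lesssim> x \<squnion> (i \<squnion> j)"
      using vsq_vle_mono[of y "x \<squnion> i" z "x \<squnion> j"] by (simp add: vsq_assoc)
    moreover have "i \<squnion> j \<in> I"
      using videal_vsq_closed[OF ideal \<open>i \<in> I\<close> \<open>j \<in> I\<close>] .
    ultimately show "y \<squnion> z \<in> ?J"
      by blast
  qed
  moreover have "I \<subset> ?J"
    using assms \<open>i\<^sub>0 \<in> I\<close> vle_vsq_left vle_vsq_right by blast
  ultimately have "d \<in> ?J"
    using rel_max unfolding rel_max_wrt_def by blast
  then obtain i where "i \<in> I" and "d \<lesssim> x \<squnion> i"
    by blast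
  with that show thesis
    using vle_vsq_swap vle_trans by blast
qed

lemma outside_covered_uniformly:
  assumes "finite X" and "X \<inter> I = {}"
  shows "\<exists>u\<in>I. \<forall>x\<in>X. d \<lesssim> u \<squnion> x"
  using assms
proof (induction X rule: finite_induct)
  case empty
  then show ?case
    using ideal unfolding videal_def by auto
next
  case (insert x X)
  then obtain u where u: "u \<in> I" "\<forall>y\<in>X. d \<lesssim> u \<squnion> y"
    by auto
  obtain i where i: "i \<in> I" "d \<lesssim> i \<squnion> x"
    using insert.prems outside_covered by blast
  have raise: "d \<lesssim> (u \<squnion> i) \<squnion> y" if "d \<lesssim> v \<squnion> y" and "v \<lesssim> u \<squnion> i" for v y
    using that vsq_vle_mono[OF that(2) vle_refl] vle_trans by blast
  have "\<forall>y\<in>insert x X. d \<lesssim> (u \<squnion> i) \<squnion> y"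
    using u i raise vle_vsq_left vle_vsq_right by blast
  moreover have "u \<squnion> i \<in> I"
    using videal_vsq_closed[OF ideal u(1) i(1)] .
  ultimately show ?case
    by blast
qed

lemma join_outside_trans:
  assumes "a \<notin> I" "b \<notin> I" "c \<notin> I" "a \<curlyvee> b \<notin> I" "b \<curlyvee> c \<notin> I"
  shows "a \<curlyvee> c \<notin> I"
proof
  assume "a \<curlyvee> c \<in> I"
  obtain u where "u \<in> I" and cover: "\<forall>x\<in>{a, b, c, a \<curlyvee> b, b \<curlyvee> c}. d \<lesssim> u \<squnion> x"
    using outside_covered_uniformly[of "{a, b, c, a \<curlyvee> b, b \<curlyvee> c}"] assms by auto
  then have "d \<lesssim> (u \<squnion> a) \<curlyvee> (u \<squnion> c)"
    using vle_join_trans[of d "u \<squnion> a" "u \<squnion> b" "u \<squnion> c"] by (simp add: vsq_join_distrib)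
  then have "d \<lesssim> u \<squnion> (a \<curlyvee> c)"
    by (simp add: vsq_join_distrib)
  moreover have "u \<squnion> (a \<curlyvee> c) \<in> I"
    using videal_vsq_closed[OF ideal \<open>u \<in> I\<close> \<open>a \<curlyvee> c \<in> I\<close>] .
  ultimately show False
    using videal_vle_closed[OF ideal] d_notin by blast
qed

lemma eps_rel_trans:
  "(a, b) \<in> eps_rel f I \<Longrightarrow> (b, c) \<in> eps_rel f I \<Longrightarrow> (a, c) \<in> eps_rel f I"
  using join_outside_trans[of a b c] by (auto simp: eps_rel_iff)

lemma equiv_eps_rel: "equiv UNIV (eps_rel f I)"
proof (rule equivI)
  show "refl (eps_rel f I)"
    by (rule reflI) (simp add: eps_rel_iff)
  show "sym (eps_rel f I)"
    by (rule symI) (rule eps_rel_sym)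
  show "trans (eps_rel f I)"
    by (rule transI) (rule eps_rel_trans)
qed simp

lemma eps_rel_join_right:
  assumes ab: "(a, b) \<in> eps_rel f I"
  shows "(a \<curlyvee> c, b \<curlyvee> c) \<in> eps_rel f I"
proof (cases "a \<in> I")
  case True
  then have "(a \<curlyvee> c, c) \<in> eps_rel f I" "(b \<curlyvee> c, c) \<in> eps_rel f I"
    using ab eps_rel_join_ideal[OF ideal] by (auto simp: eps_rel_iff)
  then show ?thesis
    using eps_rel_sym eps_rel_trans by blast
next
  case False
  then have outside: "a \<notin> I" "b \<notin> I" "a \<curlyvee> b \<notin> I"
    using ab by (auto simp: eps_rel_iff)
  have "a \<curlyvee> c \<in> I \<longleftrightarrow> b \<curlyvee> c \<in> I"
  proof (cases "c \<in> I")
    case True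
    then show ?thesis
      using outside videal_join_cancel[OF ideal] join_commute by metis
  next
    case False
    then show ?thesis
      using outside join_outside_trans[of a b c] join_outside_trans[of b a c] join_commute by metis
  qed
  then consider "a \<curlyvee> c \<in> I" "b \<curlyvee> c \<in> I" | "a \<curlyvee> c \<notin> I" "b \<curlyvee> c \<notin> I"
    by blast
  then show ?thesis
  proof cases
    case 1
    then show ?thesis
      by (simp add: eps_rel_iff)
  next
    case 2
    then have "(a \<curlyvee> c, a) \<in> eps_rel f I" "(b \<curlyvee> c, b) \<in> eps_rel f I"
      using outside eps_rel_join_absorb[OF ideal] by auto
    then show ?thesis
      using ab eps_rel_sym eps_rel_trans by blast
  qed
qed

lemma congruence_eps_rel: "congruence f (eps_rel f I)"
  unfolding congruence_def
proof (intro conjI allI impI equiv_eps_rel)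
  fix a b c e
  assume "(a, b) \<in> eps_rel f I \<and> (c, e) \<in> eps_rel f I"
  then have "(a \<curlyvee> c, b \<curlyvee> c) \<in> eps_rel f I" "(c \<curlyvee> b, e \<curlyvee> b) \<in> eps_rel f I"
    using eps_rel_join_right by blast+
  then show "(a \<curlyvee> c, b \<curlyvee> e) \<in> eps_rel f I"
    using eps_rel_trans join_commute by metis
qed

lemma flat_quotient: "flat_valgebra (UNIV // eps_rel f I) (quot_op f (eps_rel f I))"
proof -
  obtain i where "i \<in> I"
    using ideal unfolding videal_def by auto
  let ?cls = "\<lambda>a. eps_rel f I `` {a}"
  have class_eq: "?cls a = ?cls b \<longleftrightarrow> (a, b) \<in> eps_rel f I" for a b
    using eq_equiv_class_iff[OF equiv_eps_rel] by blast
  have op: "quot_op f (eps_rel f I) (?cls a) (?cls b) = ?cls (a \<curlyvee> b)" for a b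
    using quot_op_class[OF congruence_eps_rel] .
  have zero_left: "?cls (i \<curlyvee> a) = ?cls a" for a
    using eps_rel_join_ideal[OF ideal \<open>i \<in> I\<close>] class_eq by blast
  have zero_right: "?cls (a \<curlyvee> i) = ?cls a" for a
    using zero_left[of a] by (simp only: join_commute[of a i])
  have flat: "?cls (a \<curlyvee> b) = ?cls i"
    if "?cls a \<noteq> ?cls i" "?cls b \<noteq> ?cls i" "?cls a \<noteq> ?cls b" for a b
  proof -
    have "(a, i) \<notin> eps_rel f I" "(b, i) \<notin> eps_rel f I" "(a, b) \<notin> eps_rel f I"
      using that unfolding class_eq .
    with \<open>i \<in> I\<close> have "a \<curlyvee> b \<in> I"
      unfolding eps_rel_iff by blast
    with \<open>i \<in> I\<close> show ?thesis
      unfolding class_eq eps_rel_iff by blast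
  qed
  show ?thesis
    unfolding flat_valgebra_def
  proof (intro bexI[of _ "?cls i"] conjI ballI impI)
    show "?cls i \<in> UNIV // eps_rel f I"
      by (rule quotientI) simp
  next
    fix X Y
    assume "X \<in> UNIV // eps_rel f I" "Y \<in> UNIV // eps_rel f I"
      and distinct: "X \<noteq> ?cls i \<and> Y \<noteq> ?cls i \<and> X \<noteq> Y"
    then obtain a b where "X = ?cls a" "Y = ?cls b"
      by (auto elim!: quotientE)
    with distinct show "quot_op f (eps_rel f I) X Y = ?cls i"
      by (simp add: op flat)
  next
    fix X
    assume "X \<in> UNIV // eps_rel f I"
    then obtain a where "X = ?cls a"
      by (auto elim!: quotientE)
    then show "quot_op f (eps_rel f I) X X = X"
      and "quot_op f (eps_rel f I) X (?cls i) = X"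
      and "quot_op f (eps_rel f I) (?cls i) X = X"
      by (simp_all only: op zero_left zero_right join_idem)
  qed
qed

end

theorem lemma4p6:
  fixes f :: "'a \<Rightarrow> 'a \<Rightarrow> 'a"
  assumes "valgebra f"
  shows "(\<forall>I. rel_max_ideal f I \<longrightarrow>
            congruence f (eps_rel f I) \<and>
            flat_valgebra (UNIV // eps_rel f I) (quot_op f (eps_rel f I))) \<and>
         subdirect_product f {I. rel_max_ideal f I}
            (\<lambda>I. UNIV // eps_rel f I) (\<lambda>I. quot_op f (eps_rel f I))"
proof -
  interpret vee_algebra f
    by (rule vee_algebra.intro) (fact assms)
  have quotients: "congruence f (eps_rel f I) \<and>
      flat_valgebra (UNIV // eps_rel f I) (quot_op f (eps_rel f I))"
    if "rel_max_ideal f I" for I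
  proof -
    from that obtain d where "rel_max_wrt f I d"
      unfolding rel_max_ideal_def by blast
    then interpret vee_algebra_rel_max f I d
      by unfold_locales
    show ?thesis
      using congruence_eps_rel flat_quotient by blast
  qed
  moreover have "subdirect_product f {I. rel_max_ideal f I}
      (\<lambda>I. UNIV // eps_rel f I) (\<lambda>I. quot_op f (eps_rel f I))"
  proof (rule subdirect_product_quotients)
    show "congruence f (eps_rel f I)" if "I \<in> {I. rel_max_ideal f I}" for I
      using quotients that by blast
    show "a = b" if "\<forall>I\<in>{I. rel_max_ideal f I}. (a, b) \<in> eps_rel f I" for a b
      using that by (intro eps_rel_separating) blast
  qed
  ultimately show ?thesis
    by blast
qed

end
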